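(* Let $N\ge0$ be an integer, $p,q\ge0$ integers, and $a,b,a_1,\ldots,a_p,b_1,\ldots,b_q,z$ complex numbers with $z\ne0$ such that all denominators below are nonzero. Then \[ {}_{p+1}F_{q+1}^{[N]}\left(\begin{matrix}a,a_1,\ldots,a_p\\ b,b_1,\ldots,b_q\end{matrix};z\right) =\frac{(a)_{N} (b-a)_{N}}{(b)_{N}\, N!} \sum_{n=0}^{N}\frac{(1+n)_{N-n}}{(a+n)_{N-n}}\,\frac{(1+N-n)_{n}}{(b-a+N-n)_{n}}\, {}_{p}F_{q}^{[n]}\left(\begin{matrix}a_1,\ldots,a_p\\ b_1,\ldots,b_q\end{matrix};\frac{n}{N}z\right). \] (For $n=0$ the term ${}_{p}F_{q}^{[0]}$ equals $1$.)
   Context: $(x)_m=x(x+1)\cdots(x+m-1)$ is the rising factorial, $(x)_0=1$. The truncated generalized hypergeometric function is \[ {}_{p}F_{q}^{[N]}\left(\begin{matrix}a_1,\ldots,a_p\\ b_1,\ldots,b_q\end{matrix};z\right)=\sum_{m=0}^{N}\frac{(a_1)_m\cdots(a_p)_m}{(b_1)_m\cdots(b_q)_m\, m!}\,\frac{(N+1-m)_m}{(Nz^{-1}-m)_m}. \] *)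

theory Defs
  imports Complex_Main
begin

definition trunc_hyp :: "complex list \<Rightarrow> complex list \<Rightarrow> nat \<Rightarrow> complex \<Rightarrow> complex" where
  "trunc_hyp as bs N z =
     (\<Sum>m=0..N. (\<Prod>a\<leftarrow>as. pochhammer a m) / ((\<Prod>b\<leftarrow>bs. pochhammer b m) * fact m)
        * (pochhammer (of_nat N + 1 - of_nat m) m
           / pochhammer (of_nat N * inverse z - of_nat m) m))"

end

theory Submission
  imports Defs
begin

text \<open>The weights on the right-hand side simplify to (N choose n) (a)_n (b-a)_(N-n) / (b)_N,
  a beta-binomial distribution on {0..N}. By Chu--Vandermonde its factorial moments are
  E[n(n-1)...(n-m+1)] = (a)_m / (b)_m * N(N-1)...(N-m+1). In the truncated series the falling
  factorial n(n-1)...(n-m+1) appears as \<open>pochhammer (of_nat n + 1 - of_nat m) m\<close>, and since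
  n / (n z / N) = N / z, the m-th term of pFq^[n](n z / N) is c_m n(n-1)...(n-m+1) with c_m
  independent of n. Averaging over n thus multiplies c_m by (a)_m / (b)_m * N(N-1)...(N-m+1),
  which yields the m-th term of (p+1)F(q+1)^[N](z).\<close>

lemma pochhammer_of_nat_plus_one_minus:
  "pochhammer (of_nat n + 1 - of_nat m :: 'a::field_char_0) m =
     (if m \<le> n then fact n / fact (n - m) else 0)"
proof (cases "m \<le> n")
  case True
  have "(fact n :: 'a) = pochhammer 1 ((n - m) + m)"
    using True by (simp add: pochhammer_fact)
  also have "\<dots> = fact (n - m) * pochhammer (1 + of_nat (n - m)) m"
    by (simp add: pochhammer_product' pochhammer_fact)
  also have "(1 + of_nat (n - m) :: 'a) = of_nat n + 1 - of_nat m"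
    using True by (simp add: of_nat_diff)
  finally show ?thesis
    using True by (simp add: field_simps)
next
  case False
  then have shift: "(of_nat n + 1 - of_nat m :: 'a) = - of_nat (m - 1 - n)"
    by (simp add: of_nat_diff)
  have "pochhammer (- of_nat (m - 1 - n) :: 'a) m = 0"
    using False by (subst pochhammer_of_nat_eq_0_iff) simp
  with False show ?thesis
    by (simp only: shift if_False)
qed

lemma pochhammer_weights_eq_binomial:
  fixes a c :: "'a::field_char_0"
  assumes "n \<le> N"
    and "pochhammer (a + of_nat n) (N - n) \<noteq> 0"
    and "pochhammer (c + of_nat N - of_nat n) n \<noteq> 0"
  shows "pochhammer a N * pochhammer c N / fact N *
      (pochhammer (1 + of_nat n) (N - n) / pochhammer (a + of_nat n) (N - n)
       * (pochhammer (1 + of_nat N - of_nat n) n / pochhammer (c + of_nat N - of_nat n) n))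
    = of_nat (N choose n) * pochhammer a n * pochhammer c (N - n)"
proof -
  have fact_quot: "pochhammer (1 + of_nat n) (N - n) = (fact N / fact n :: 'a)"
    using pochhammer_of_nat_plus_one_minus[of N "N - n", where 'a='a] assms(1)
    by (simp add: of_nat_diff add.commute)
  have fact_quot': "pochhammer (1 + of_nat N - of_nat n) n = (fact N / fact (N - n) :: 'a)"
    using pochhammer_of_nat_plus_one_minus[of N n, where 'a='a] assms(1)
    by (simp add: add.commute)
  have split_a: "pochhammer a N = pochhammer a n * pochhammer (a + of_nat n) (N - n)"
    using assms(1) by (rule pochhammer_product)
  have split_c: "pochhammer c N = pochhammer c (N - n) * pochhammer (c + of_nat N - of_nat n) n"
    using pochhammer_product[of "N - n" N c] assms(1) by (simp add: of_nat_diff algebra_simps)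
  show ?thesis
    unfolding fact_quot fact_quot' split_a split_c using assms
    by (simp add: binomial_fact field_simps)
qed

lemma binomial_pochhammer_falling_moment:
  fixes a c :: "'a::field_char_0"
  shows "(\<Sum>n=0..N. of_nat (N choose n) * pochhammer a n * pochhammer c (N - n)
            * pochhammer (of_nat n + 1 - of_nat m) m)
    = pochhammer (of_nat N + 1 - of_nat m) m * pochhammer a m * pochhammer (a + c + of_nat m) (N - m)"
proof (cases "m \<le> N")
  case True
  define M where "M = N - m"
  have "(\<Sum>n=0..N. of_nat (N choose n) * pochhammer a n * pochhammer c (N - n)
            * pochhammer (of_nat n + 1 - of_nat m) m)
      = (\<Sum>n=m..N. of_nat (N choose n) * pochhammer a n * pochhammer c (N - n)
            * pochhammer (of_nat n + 1 - of_nat m) m)"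
    by (rule sum.mono_neutral_right) (auto simp: pochhammer_of_nat_plus_one_minus)
  also have "\<dots> = (\<Sum>k=0..M. of_nat (N choose (m + k)) * pochhammer a (m + k) * pochhammer c (M - k)
            * pochhammer (of_nat (m + k) + 1 - of_nat m) m)"
    unfolding M_def sum.atLeastAtMost_shift_0[OF True] by (simp add: diff_diff_left)
  also have "\<dots> = (\<Sum>k=0..M. fact N / fact M * pochhammer a m *
            (of_nat (M choose k) * pochhammer (a + of_nat m) k * pochhammer c (M - k)))"
  proof (rule sum.cong)
    fix k assume "k \<in> {0..M}"
    then have "k \<le> M" "m + k \<le> N" "N - (m + k) = M - k"
      using True by (auto simp: M_def)
    have "of_nat (N choose (m + k)) * pochhammer a (m + k) * pochhammer c (M - k)
            * pochhammer (of_nat (m + k) + 1 - of_nat m) m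
        = (of_nat (N choose (m + k)) * pochhammer (of_nat (m + k) + 1 - of_nat m) m)
            * (pochhammer a m * pochhammer (a + of_nat m) k * pochhammer c (M - k))"
      by (simp only: pochhammer_product' mult_ac)
    also have "of_nat (N choose (m + k)) * pochhammer (of_nat (m + k) + 1 - of_nat m) m
        = (fact N / fact M * of_nat (M choose k) :: 'a)"
      using \<open>k \<le> M\<close> \<open>m + k \<le> N\<close> pochhammer_of_nat_plus_one_minus[of "m + k" m, where 'a='a]
      by (simp add: binomial_fact \<open>N - (m + k) = M - k\<close> M_def[symmetric])
    finally show "of_nat (N choose (m + k)) * pochhammer a (m + k) * pochhammer c (M - k)
            * pochhammer (of_nat (m + k) + 1 - of_nat m) m
        = fact N / fact M * pochhammer a m *
            (of_nat (M choose k) * pochhammer (a + of_nat m) k * pochhammer c (M - k))"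
      by (simp only: mult_ac)
  qed simp
  also have "\<dots> = fact N / fact M * pochhammer a m * pochhammer (a + of_nat m + c) M"
    by (simp add: pochhammer_binomial_sum atLeast0AtMost sum_distrib_left)
  finally show ?thesis
    using True pochhammer_of_nat_plus_one_minus[of N m, where 'a='a]
    by (simp add: M_def algebra_simps)
qed (simp add: pochhammer_of_nat_plus_one_minus)

lemma beta_binomial_falling_moment:
  fixes a b :: "'a::field_char_0"
  assumes "m \<le> N"
    and "pochhammer b N \<noteq> 0"
    and "\<forall>n\<le>N. pochhammer (a + of_nat n) (N - n) \<noteq> 0"
    and "\<forall>n\<le>N. pochhammer (b - a + of_nat N - of_nat n) n \<noteq> 0"
  shows "pochhammer a N * pochhammer (b - a) N / (pochhammer b N * fact N) *
    (\<Sum>n=0..N. pochhammer (1 + of_nat n) (N - n) / pochhammer (a + of_nat n) (N - n)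
       * (pochhammer (1 + of_nat N - of_nat n) n / pochhammer (b - a + of_nat N - of_nat n) n)
       * pochhammer (of_nat n + 1 - of_nat m) m)
    = pochhammer a m / pochhammer b m * pochhammer (of_nat N + 1 - of_nat m) m"
  (is "?lhs = _")
proof -
  have split_b: "pochhammer b N = pochhammer b m * pochhammer (b + of_nat m) (N - m)"
    using assms(1) by (rule pochhammer_product)
  have "?lhs = (\<Sum>n=0..N. pochhammer a N * pochhammer (b - a) N / fact N *
       (pochhammer (1 + of_nat n) (N - n) / pochhammer (a + of_nat n) (N - n)
       * (pochhammer (1 + of_nat N - of_nat n) n / pochhammer (b - a + of_nat N - of_nat n) n))
       * pochhammer (of_nat n + 1 - of_nat m) m) / pochhammer b N"
    by (simp add: sum_distrib_left sum_divide_distrib mult_ac)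
  also have "\<dots> = (\<Sum>n=0..N. of_nat (N choose n) * pochhammer a n * pochhammer (b - a) (N - n)
            * pochhammer (of_nat n + 1 - of_nat m) m) / pochhammer b N"
    using assms(3,4) by (intro arg_cong2[where f="(/)"] sum.cong refl)
      (subst pochhammer_weights_eq_binomial; simp)
  also have "\<dots> = pochhammer (of_nat N + 1 - of_nat m) m * pochhammer a m
      * pochhammer (b + of_nat m) (N - m) / (pochhammer b m * pochhammer (b + of_nat m) (N - m))"
    unfolding binomial_pochhammer_falling_moment split_b by simp
  finally show ?thesis
    using assms(2) split_b by simp
qed

lemma sum_weighted_sum_swap:
  fixes C :: "'a::comm_semiring_0"
  shows "C * (\<Sum>n\<in>A. w n * (\<Sum>m\<in>B. c m * f n m)) = (\<Sum>m\<in>B. c m * (C * (\<Sum>n\<in>A. w n * f n m)))"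
proof -
  have "C * (\<Sum>n\<in>A. w n * (\<Sum>m\<in>B. c m * f n m)) = (\<Sum>n\<in>A. \<Sum>m\<in>B. c m * (C * (w n * f n m)))"
    by (simp only: sum_distrib_left mult.left_commute)
  also have "\<dots> = (\<Sum>m\<in>B. \<Sum>n\<in>A. c m * (C * (w n * f n m)))"
    by (rule sum.swap)
  finally show ?thesis
    by (simp only: sum_distrib_left)
qed

lemma trunc_hyp_eq_sum_upto:
  assumes "n \<le> K"
  shows "trunc_hyp as bs n w =
    (\<Sum>m=0..K. (\<Prod>a\<leftarrow>as. pochhammer a m) / ((\<Prod>b\<leftarrow>bs. pochhammer b m) * fact m)
        * (pochhammer (of_nat n + 1 - of_nat m) m / pochhammer (of_nat n * inverse w - of_nat m) m))"
  unfolding trunc_hyp_def using assms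
  by (intro sum.mono_neutral_left) (auto simp: pochhammer_of_nat_plus_one_minus)

lemma trunc_hyp_rescaled:
  assumes "n \<le> N"
  shows "trunc_hyp as bs n (of_nat n / of_nat N * z) =
    (\<Sum>m=0..N. (\<Prod>a\<leftarrow>as. pochhammer a m) / ((\<Prod>b\<leftarrow>bs. pochhammer b m) * fact m)
        / pochhammer (of_nat N * inverse z - of_nat m) m * pochhammer (of_nat n + 1 - of_nat m) m)"
proof (cases "n = 0")
  case True
  have falling_zero: "pochhammer (1 - of_nat m :: complex) m = (if m = 0 then 1 else 0)" for m
    using pochhammer_of_nat_plus_one_minus[of 0 m, where 'a=complex] by simp
  have "trunc_hyp as bs n (of_nat n / of_nat N * z) =
    (\<Sum>m=0..N. (\<Prod>a\<leftarrow>as. pochhammer a m) / ((\<Prod>b\<leftarrow>bs. pochhammer b m) * fact m)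
        * (pochhammer (of_nat n + 1 - of_nat m) m
           / pochhammer (of_nat n * inverse (of_nat n / of_nat N * z) - of_nat m) m))"
    using assms by (rule trunc_hyp_eq_sum_upto)
  also have "\<dots> = (\<Sum>m=0..N. (\<Prod>a\<leftarrow>as. pochhammer a m) / ((\<Prod>b\<leftarrow>bs. pochhammer b m) * fact m)
        / pochhammer (of_nat N * inverse z - of_nat m) m * pochhammer (of_nat n + 1 - of_nat m) m)"
    using True by (intro sum.cong refl) (simp add: falling_zero)
  finally show ?thesis .
next
  case False
  with assms have "of_nat n * inverse (of_nat n / of_nat N * z) = (of_nat N * inverse z :: complex)"
    by (cases "z = 0") (simp_all add: field_simps)
  then show ?thesis
    using assms by (simp add: trunc_hyp_eq_sum_upto[of n N] mult_ac)
qed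

theorem theorem3p3:
  fixes N :: nat and a b z :: complex and as bs :: "complex list"
  assumes "z \<noteq> 0"
    and "\<forall>m\<le>N. pochhammer b m \<noteq> 0"
    and "\<forall>m\<le>N. \<forall>c\<in>set bs. pochhammer c m \<noteq> 0"
    and "\<forall>m\<le>N. pochhammer (of_nat N * inverse z - of_nat m) m \<noteq> 0"
    and "\<forall>n\<le>N. pochhammer (a + of_nat n) (N - n) \<noteq> 0"
    and "\<forall>n\<le>N. pochhammer (b - a + of_nat N - of_nat n) n \<noteq> 0"
  shows "trunc_hyp (a # as) (b # bs) N z =
    pochhammer a N * pochhammer (b - a) N / (pochhammer b N * fact N) *
    (\<Sum>n=0..N. pochhammer (1 + of_nat n) (N - n) / pochhammer (a + of_nat n) (N - n)
       * (pochhammer (1 + of_nat N - of_nat n) n / pochhammer (b - a + of_nat N - of_nat n) n)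
       * trunc_hyp as bs n (of_nat n / of_nat N * z))"
proof -
  define C where "C = pochhammer a N * pochhammer (b - a) N / (pochhammer b N * fact N)"
  define w where "w n = pochhammer (1 + of_nat n) (N - n) / pochhammer (a + of_nat n) (N - n)
       * (pochhammer (1 + of_nat N - of_nat n) n / pochhammer (b - a + of_nat N - of_nat n) n)" for n
  define c where "c m = (\<Prod>a\<leftarrow>as. pochhammer a m) / ((\<Prod>b\<leftarrow>bs. pochhammer b m) * fact m)
       / pochhammer (of_nat N * inverse z - of_nat m) m" for m
  have "C * (\<Sum>n=0..N. w n * trunc_hyp as bs n (of_nat n / of_nat N * z))
      = C * (\<Sum>n=0..N. w n * (\<Sum>m=0..N. c m * pochhammer (of_nat n + 1 - of_nat m) m))"
    by (intro arg_cong[where f="(*) C"] sum.cong refl) (subst trunc_hyp_rescaled; simp add: c_def)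
  also have "\<dots> = (\<Sum>m=0..N. c m * (C * (\<Sum>n=0..N. w n * pochhammer (of_nat n + 1 - of_nat m) m)))"
    by (rule sum_weighted_sum_swap)
  also have "\<dots> = (\<Sum>m=0..N. c m * (pochhammer a m / pochhammer b m * pochhammer (of_nat N + 1 - of_nat m) m))"
    using assms(2,5,6) beta_binomial_falling_moment[of _ N b a, folded C_def w_def]
    by (intro sum.cong refl) simp
  also have "\<dots> = trunc_hyp (a # as) (b # bs) N z"
    by (simp add: trunc_hyp_def c_def mult_ac)
  finally show ?thesis
    by (simp add: C_def w_def)
qed

end
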